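(* For any $\alpha\ge0$, almost surely $\bigcap_{n\ge1}\overline{T^\alpha_n}=\bigcap_{n\ge1}T^\alpha_n$.
   Context: Let $(X_j^i)_{j\ge 1,\,i\ge 0}$ be i.i.d. uniform on $\{-1,1\}$ and $(N_j(t),t\ge0)_{j\ge1}$ independent rate-$1$ Poisson processes independent of them; set $X_j(t)=X_j^i$ whenever $N_j(t)=i$ and $Z_n(t)=\sum_{k=1}^n\prod_{j=1}^k X_j(t)$. For $\alpha\ge0$ let $P^\alpha_n(t)=\{Z_i(t)\ge i^\alpha \ \forall i=1,\ldots,n\}$, $T^\alpha_n=\{t\in[0,1]:P^\alpha_n(t)\text{ holds}\}$, and $\overline{T^\alpha_n}$ its closure. *)

theory Defs
  imports "HOL-Probability.Probability"
begin

definition poisson_count :: "(nat \<Rightarrow> nat \<Rightarrow> 'a \<Rightarrow> real) \<Rightarrow> nat \<Rightarrow> real \<Rightarrow> 'a \<Rightarrow> nat" where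
  "poisson_count E j t \<omega> = card {k::nat. 1 \<le> k \<and> (\<Sum>i=1..k. E j i \<omega>) \<le> t}"

definition Xt :: "(nat \<Rightarrow> nat \<Rightarrow> 'a \<Rightarrow> real) \<Rightarrow> (nat \<Rightarrow> nat \<Rightarrow> 'a \<Rightarrow> real) \<Rightarrow> nat \<Rightarrow> real \<Rightarrow> 'a \<Rightarrow> real" where
  "Xt X E j t \<omega> = X j (poisson_count E j t \<omega>) \<omega>"

definition Zt :: "(nat \<Rightarrow> nat \<Rightarrow> 'a \<Rightarrow> real) \<Rightarrow> (nat \<Rightarrow> nat \<Rightarrow> 'a \<Rightarrow> real) \<Rightarrow> nat \<Rightarrow> real \<Rightarrow> 'a \<Rightarrow> real" where
  "Zt X E n t \<omega> = (\<Sum>k=1..n. \<Prod>j=1..k. Xt X E j t \<omega>)"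

definition Tset :: "(nat \<Rightarrow> nat \<Rightarrow> 'a \<Rightarrow> real) \<Rightarrow> (nat \<Rightarrow> nat \<Rightarrow> 'a \<Rightarrow> real) \<Rightarrow> real \<Rightarrow> nat \<Rightarrow> 'a \<Rightarrow> real set" where
  "Tset X E \<alpha> n \<omega> = {t \<in> {0..1}. \<forall>i\<in>{1..n}. Zt X E i t \<omega> \<ge> real i powr \<alpha>}"

end

(*
  Almost surely every interarrival time is positive and every counting process
  jumps only finitely often in [0, 1], so each Z_n(t) is a right-continuous step function of t.
  A point t of every closure but outside some T_n is then a limit from the left of points of
  T_n, so the left limits Z_n(t-) are at least n^alpha >= 1 for all n; and t must be a jump
  time of one of the processes, since otherwise Z_n(t) = Z_n(t-) and t would lie in T_n.
  At an arrival time tau = S_j(k), the left counts N_i(tau-) are determined by the arrival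
  times, which are independent of the signs.  Given these counts, Z_n(tau-) is a simple
  random walk, which stays >= 1 for N steps with a probability tending to 0 (recurrence).
  As there are only countably many arrival times, the bad event is null.
*)
theory Submission
  imports Defs
begin

section \<open>Walks that stay above one\<close>

fun prod_walk_pos :: "real \<Rightarrow> real \<Rightarrow> real list \<Rightarrow> bool" where
  "prod_walk_pos h s [] = True"
| "prod_walk_pos h s (y # ys) = (1 \<le> h + s * y \<and> prod_walk_pos (h + s * y) (s * y) ys)"

lemma prod_walk_pos_map_upt:
  "prod_walk_pos h s (map y [a..<b]) \<longleftrightarrow> (\<forall>n\<in>{a..<b}. 1 \<le> h + s * (\<Sum>l=a..n. \<Prod>i=a..l. y i))"
proof (induction "b - a" arbitrary: a h s)
  case 0
  then show ?case by simp
next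
  case (Suc d)
  then have "a < b" by simp
  have split: "(\<Sum>l=a..n. \<Prod>i=a..l. y i) = y a + y a * (\<Sum>l=Suc a..n. \<Prod>i=Suc a..l. y i)"
    if "a \<le> n" for n
    using that by (simp add: sum.atLeast_Suc_atMost prod.atLeast_Suc_atMost sum_distrib_left)
  have "{a..<b} = insert a {Suc a..<b}"
    using \<open>a < b\<close> by auto
  then show ?case
    using Suc.hyps(1)[of "Suc a"] Suc.hyps(2) \<open>a < b\<close> split
    by (auto simp: upt_conv_Cons algebra_simps)
qed

definition sign_lists :: "nat \<Rightarrow> real list set" where
  "sign_lists N = {ys. length ys = N \<and> set ys \<subseteq> {-1, 1}}"

lemma finite_sign_lists: "finite (sign_lists N)"
  using finite_lists_length_eq[of "{-1, 1 :: real}" N] by (simp add: sign_lists_def conj_commute)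

lemma sign_lists_Suc: "sign_lists (Suc N) = (#) 1 ` sign_lists N \<union> (#) (-1) ` sign_lists N"
  by (auto simp: sign_lists_def length_Suc_conv)

fun stay_prob :: "nat \<Rightarrow> real \<Rightarrow> real" where
  "stay_prob 0 h = 1"
| "stay_prob (Suc N) h =
     ((if 1 \<le> h + 1 then stay_prob N (h + 1) else 0) + (if 1 \<le> h - 1 then stay_prob N (h - 1) else 0)) / 2"

lemma card_prod_walk_pos:
  assumes "s \<in> {-1, 1}"
  shows "real (card {ys \<in> sign_lists N. prod_walk_pos h s ys}) = 2 ^ N * stay_prob N h"
  using assms
proof (induction N arbitrary: h s)
  case 0
  have "{ys \<in> sign_lists 0. prod_walk_pos h s ys} = {[]}"
    by (auto simp: sign_lists_def)
  then show ?case by simp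
next
  case (Suc N)
  have step: "real (card {ys \<in> sign_lists N. prod_walk_pos h s (y # ys)}) =
      (if 1 \<le> h + s * y then 2 ^ N * stay_prob N (h + s * y) else 0)" if "y \<in> {-1, 1}" for y
    using Suc.IH[of "s * y" "h + s * y"] Suc.prems that by auto
  have "{ys \<in> sign_lists (Suc N). prod_walk_pos h s ys} =
      (#) 1 ` {ys \<in> sign_lists N. prod_walk_pos h s (1 # ys)} \<union>
      (#) (-1) ` {ys \<in> sign_lists N. prod_walk_pos h s ((-1) # ys)}"
    unfolding sign_lists_Suc by auto
  then have "card {ys \<in> sign_lists (Suc N). prod_walk_pos h s ys} =
      card {ys \<in> sign_lists N. prod_walk_pos h s (1 # ys)} +
      card {ys \<in> sign_lists N. prod_walk_pos h s ((-1) # ys)}"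
    by (simp only:) (subst card_Un_disjoint; auto simp: card_image finite_sign_lists)
  then show ?case
    using step[of 1] step[of "-1"] Suc.prems by (auto simp: field_simps)
qed

lemma stay_prob_bounds: "0 \<le> stay_prob N h \<and> stay_prob N h \<le> 1"
proof (induction N arbitrary: h)
  case (Suc N)
  show ?case using Suc.IH[of "h + 1"] Suc.IH[of "h - 1"] by auto
qed simp

lemma stay_prob_Suc_le: "stay_prob (Suc N) h \<le> stay_prob N h"
proof (induction N arbitrary: h)
  case 0
  show ?case using stay_prob_bounds[of 1 h] by simp
next
  case (Suc N)
  have "stay_prob (Suc (Suc N)) h =
      ((if 1 \<le> h + 1 then stay_prob (Suc N) (h + 1) else 0)
       + (if 1 \<le> h - 1 then stay_prob (Suc N) (h - 1) else 0)) / 2"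
    by simp
  also have "\<dots> \<le> ((if 1 \<le> h + 1 then stay_prob N (h + 1) else 0)
       + (if 1 \<le> h - 1 then stay_prob N (h - 1) else 0)) / 2"
    using Suc.IH[of "h + 1"] Suc.IH[of "h - 1"] by (intro divide_right_mono add_mono) auto
  also have "\<dots> = stay_prob (Suc N) h"
    by simp
  finally show ?case .
qed

lemma bounded_harmonic_nat_eq_0:
  fixes L :: "nat \<Rightarrow> real"
  assumes "L 0 = 0" and harmonic: "\<And>n. 1 \<le> n \<Longrightarrow> 2 * L n = L (Suc n) + L (n - 1)"
    and bounded: "\<And>n. \<bar>L n\<bar> \<le> B"
  shows "L n = 0"
proof -
  have linear: "L n = n * L 1 \<and> L (Suc n) = Suc n * L 1" for n
  proof (induction n)
    case 0
    then show ?case using \<open>L 0 = 0\<close> by simp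
  next
    case (Suc n)
    then show ?case using harmonic[of "Suc n"] by (simp add: algebra_simps)
  qed
  have "L 1 = 0"
  proof (rule ccontr)
    assume "L 1 \<noteq> 0"
    then obtain n :: nat where "B / \<bar>L 1\<bar> < n"
      using reals_Archimedean2 by blast
    then have "B < \<bar>L n\<bar>"
      using \<open>L 1 \<noteq> 0\<close> linear[of n] by (simp add: field_simps abs_mult)
    then show False using bounded[of n] by simp
  qed
  then show ?thesis using linear[of n] by simp
qed

lemma stay_prob_tendsto_0: "(\<lambda>N. stay_prob N 0) \<longlonglongrightarrow> 0"
proof -
  \<comment> \<open>\<open>g\<close> is \<open>stay_prob\<close> at integer heights with height 0 made absorbing; its limit in \<open>N\<close>
    is a bounded harmonic function on \<open>\<nat>\<close> vanishing at 0, hence zero.\<close>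
  define g where "g N n = (if n = 0 then 0 else stay_prob N (real n))" for N n :: nat
  define L where "L n = lim (\<lambda>N. g N n)" for n
  have g_bounds: "0 \<le> g N n \<and> g N n \<le> 1" for N n
    using stay_prob_bounds by (simp add: g_def)
  have g_Suc: "g (Suc N) n = (g N (Suc n) + g N (n - 1)) / 2" if "1 \<le> n" for N n
    using that by (auto simp: g_def of_nat_diff add.commute)
  have g_tendsto: "(\<lambda>N. g N n) \<longlonglongrightarrow> L n" for n
  proof -
    have "decseq (\<lambda>N. g N n)"
      by (rule decseq_SucI) (simp add: g_def stay_prob_Suc_le del: stay_prob.simps(2))
    then show ?thesis
      unfolding L_def using g_bounds
      by (intro convergent_LIMSEQ_iff[THEN iffD1] Bseq_monoseq_convergent decseq_imp_monoseq
          BseqI'[of _ 1]) auto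
  qed
  have "L n = 0" for n
  proof (rule bounded_harmonic_nat_eq_0)
    show "L 0 = 0"
      using g_tendsto[of 0] by (simp add: g_def LIMSEQ_const_iff)
    show "2 * L n = L (Suc n) + L (n - 1)" if "1 \<le> n" for n
    proof -
      have "(\<lambda>N. g (Suc N) n) \<longlonglongrightarrow> (L (Suc n) + L (n - 1)) / 2"
        unfolding g_Suc[OF that] by (intro tendsto_divide tendsto_add tendsto_const g_tendsto) simp
      moreover have "(\<lambda>N. g (Suc N) n) \<longlonglongrightarrow> L n"
        using g_tendsto by (rule LIMSEQ_Suc)
      ultimately show ?thesis using LIMSEQ_unique by fastforce
    qed
    show "\<bar>L n\<bar> \<le> 1" for n
      using g_bounds by (intro tendsto_le[OF _ tendsto_const tendsto_rabs[OF g_tendsto]]) auto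
  qed
  then have "(\<lambda>N. g N 1 / 2) \<longlonglongrightarrow> 0"
    using g_tendsto[of 1] by (auto intro: tendsto_eq_intros)
  moreover have "(\<lambda>N. stay_prob (Suc N) 0) = (\<lambda>N. g N 1 / 2)"
    by (simp add: g_def)
  ultimately have "(\<lambda>N. stay_prob (Suc N) 0) \<longlonglongrightarrow> 0"
    by (simp only:)
  then show ?thesis
    by (rule LIMSEQ_imp_Suc)
qed

lemma map_upt_eq_iff:
  assumes "length ys = N"
  shows "map f [1..<Suc N] = ys \<longleftrightarrow> (\<forall>i\<in>{1..N}. f i = ys ! (i - 1))"
proof -
  have "map f [1..<Suc N] = ys \<longleftrightarrow> (\<forall>i\<in>{..<N}. f (Suc i) = ys ! i)"
    using assms by (auto simp: list_eq_iff_nth_eq simp del: upt_Suc)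
  also have "\<dots> \<longleftrightarrow> (\<forall>i\<in>Suc ` {..<N}. f i = ys ! (i - 1))"
    by simp
  finally show ?thesis
    by (simp add: image_Suc_lessThan)
qed

section \<open>Paths of the counting processes\<close>

definition arrival_time :: "(nat \<Rightarrow> nat \<Rightarrow> 'a \<Rightarrow> real) \<Rightarrow> nat \<Rightarrow> nat \<Rightarrow> 'a \<Rightarrow> real" where
  "arrival_time E j k \<omega> = (\<Sum>i=1..k. E j i \<omega>)"

text \<open>The left limits \<open>N\<^sub>j(t-)\<close> and \<open>Z\<^sub>n(t-)\<close>.\<close>

definition poisson_count_left :: "(nat \<Rightarrow> nat \<Rightarrow> 'a \<Rightarrow> real) \<Rightarrow> nat \<Rightarrow> real \<Rightarrow> 'a \<Rightarrow> nat" where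
  "poisson_count_left E j t \<omega> = card {k. 1 \<le> k \<and> arrival_time E j k \<omega> < t}"

definition Zt_left :: "(nat \<Rightarrow> nat \<Rightarrow> 'a \<Rightarrow> real) \<Rightarrow> (nat \<Rightarrow> nat \<Rightarrow> 'a \<Rightarrow> real) \<Rightarrow> nat \<Rightarrow> real \<Rightarrow> 'a \<Rightarrow> real" where
  "Zt_left X E n t \<omega> = (\<Sum>k=1..n. \<Prod>j=1..k. X j (poisson_count_left E j t \<omega>) \<omega>)"

definition left_walk_survives ::
    "(nat \<Rightarrow> nat \<Rightarrow> 'a \<Rightarrow> real) \<Rightarrow> (nat \<Rightarrow> nat \<Rightarrow> 'a \<Rightarrow> real) \<Rightarrow> nat \<Rightarrow> nat \<Rightarrow> 'a \<Rightarrow> bool" where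
  "left_walk_survives X E j k \<omega> \<longleftrightarrow> arrival_time E j k \<omega> \<le> 1 \<and>
     (\<forall>n\<ge>1. 1 \<le> Zt_left X E n (arrival_time E j k \<omega>) \<omega>)"

definition regular_arrivals :: "(nat \<Rightarrow> nat \<Rightarrow> 'a \<Rightarrow> real) \<Rightarrow> 'a \<Rightarrow> bool" where
  "regular_arrivals E \<omega> \<longleftrightarrow>
     (\<forall>j\<ge>1. \<forall>k\<ge>1. 0 < E j k \<omega>) \<and> (\<forall>j\<ge>1. \<exists>k. 1 < arrival_time E j k \<omega>)"

lemma regular_arrivalsD:
  assumes "regular_arrivals E \<omega>" "1 \<le> j"
  shows "1 \<le> k \<Longrightarrow> 0 < E j k \<omega>" and "\<exists>k. 1 < arrival_time E j k \<omega>"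
  using assms by (auto simp: regular_arrivals_def)

lemma poisson_count_eq: "poisson_count E j t \<omega> = card {k. 1 \<le> k \<and> arrival_time E j k \<omega> \<le> t}"
  by (simp add: poisson_count_def arrival_time_def)

lemma mono_arrival_time:
  assumes "regular_arrivals E \<omega>" "1 \<le> j"
  shows "mono (\<lambda>k. arrival_time E j k \<omega>)"
proof (rule incseq_SucI)
  fix k
  have "0 < E j (Suc k) \<omega>"
    using regular_arrivalsD(1)[OF assms] by simp
  then show "arrival_time E j k \<omega> \<le> arrival_time E j (Suc k) \<omega>"
    by (simp add: arrival_time_def)
qed

lemma arrival_time_pos:
  assumes "regular_arrivals E \<omega>" "1 \<le> j" "1 \<le> k"
  shows "0 < arrival_time E j k \<omega>"
  unfolding arrival_time_def using assms by (intro sum_pos) (auto intro: regular_arrivalsD(1))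

lemma eventually_at_right_le_iff:
  fixes S :: "nat \<Rightarrow> real"
  assumes "mono S" "t < S m"
  shows "\<forall>\<^sub>F s in at_right t. \<forall>k. S k \<le> s \<longleftrightarrow> S k \<le> t"
proof -
  have "\<forall>\<^sub>F s in at_right t. t < s \<and> (\<forall>k\<in>{..m}. t < S k \<longrightarrow> s < S k)"
    by (intro eventually_conj eventually_at_right_less eventually_ball_finite ballI impI)
       (auto elim: eventually_mono[OF eventually_at_right_real])
  then show ?thesis
  proof eventually_elim
    case (elim s)
    have "t < S k \<longrightarrow> s < S k" for k
      using elim monoD[OF \<open>mono S\<close>, of m k] \<open>t < S m\<close> by (cases "k \<le> m") auto
    then show ?case
      using elim by (meson less_le_not_le order.trans not_le)
  qed
qed

lemma eventually_at_left_le_iff: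
  fixes S :: "nat \<Rightarrow> real"
  assumes "mono S" "t < S m"
  shows "\<forall>\<^sub>F s in at_left t. \<forall>k. S k \<le> s \<longleftrightarrow> S k < t"
proof -
  have "\<forall>\<^sub>F s in at_left t. s < t"
    using eventually_at_left_real[of "t - 1" t] by (rule eventually_mono) auto
  moreover have "\<forall>\<^sub>F s in at_left t. \<forall>k\<in>{..m}. S k < t \<longrightarrow> S k < s"
    by (intro eventually_ball_finite ballI impI)
       (auto elim: eventually_mono[OF eventually_at_left_real])
  ultimately have "\<forall>\<^sub>F s in at_left t. s < t \<and> (\<forall>k\<in>{..m}. S k < t \<longrightarrow> S k < s)"
    by (rule eventually_conj)
  then show ?thesis
  proof eventually_elim
    case (elim s)
    have "S k < t \<longrightarrow> S k < s" for k
      using elim monoD[OF \<open>mono S\<close>, of m k] \<open>t < S m\<close> by (cases "k \<le> m") auto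
    then show ?case
      using elim by (meson less_le_not_le order.trans not_le)
  qed
qed

lemma eventually_poisson_counts_at_right:
  assumes "regular_arrivals E \<omega>" "t \<le> 1"
  shows "\<forall>\<^sub>F s in at_right t. \<forall>j\<in>{1..n}. poisson_count E j s \<omega> = poisson_count E j t \<omega>"
proof (intro eventually_ball_finite ballI)
  fix j assume "j \<in> {1..n}"
  then have j: "1 \<le> j"
    by simp
  obtain m where "1 < arrival_time E j m \<omega>"
    using regular_arrivalsD(2)[OF assms(1) j] by blast
  with assms(2) have "t < arrival_time E j m \<omega>"
    by simp
  from eventually_at_right_le_iff[OF mono_arrival_time[OF assms(1) j] this]
  show "\<forall>\<^sub>F s in at_right t. poisson_count E j s \<omega> = poisson_count E j t \<omega>"
    by eventually_elim (simp add: poisson_count_eq)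
qed simp

lemma eventually_poisson_counts_at_left:
  assumes "regular_arrivals E \<omega>" "t \<le> 1"
  shows "\<forall>\<^sub>F s in at_left t. \<forall>j\<in>{1..n}. poisson_count E j s \<omega> = poisson_count_left E j t \<omega>"
proof (intro eventually_ball_finite ballI)
  fix j assume "j \<in> {1..n}"
  then have j: "1 \<le> j"
    by simp
  obtain m where "1 < arrival_time E j m \<omega>"
    using regular_arrivalsD(2)[OF assms(1) j] by blast
  with assms(2) have "t < arrival_time E j m \<omega>"
    by simp
  from eventually_at_left_le_iff[OF mono_arrival_time[OF assms(1) j] this]
  show "\<forall>\<^sub>F s in at_left t. poisson_count E j s \<omega> = poisson_count_left E j t \<omega>"
    by eventually_elim (simp add: poisson_count_eq poisson_count_left_def)
qed simp

lemma Zt_eq_of_poisson_counts_eq: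
  assumes "\<forall>j\<in>{1..n}. poisson_count E j s \<omega> = c j" "i \<le> n"
  shows "Zt X E i s \<omega> = (\<Sum>k=1..i. \<Prod>j=1..k. X j (c j) \<omega>)"
  unfolding Zt_def Xt_def using assms by (intro sum.cong prod.cong) auto

lemma Tset_subset_unit_interval: "Tset X E \<alpha> n \<omega> \<subseteq> {0..1}"
  by (auto simp: Tset_def)

lemma Tset_antimono: "m \<le> n \<Longrightarrow> Tset X E \<alpha> n \<omega> \<subseteq> Tset X E \<alpha> m \<omega>"
  by (auto simp: Tset_def)

lemma Zt_left_ge_of_mem_closure_Tset:
  assumes "regular_arrivals E \<omega>" "t \<in> closure (Tset X E \<alpha> n \<omega>)" "t \<notin> Tset X E \<alpha> n \<omega>"
  shows "\<forall>i\<in>{1..n}. real i powr \<alpha> \<le> Zt_left X E i t \<omega>"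
proof -
  let ?T = "Tset X E \<alpha> n \<omega>"
  have "closure ?T \<subseteq> {0..1}"
    by (rule closure_minimal[OF Tset_subset_unit_interval]) simp
  with assms(2) have t: "0 \<le> t" "t \<le> 1"
    by auto
  have "\<exists>\<^sub>F s in at t. s \<in> ?T"
    using assms(2,3) by (simp add: closure_def islimpt_conv_frequently_at)
  then have "(\<exists>\<^sub>F s in at_left t. s \<in> ?T) \<or> (\<exists>\<^sub>F s in at_right t. s \<in> ?T)"
    by (simp add: at_eq_sup_left_right frequently_def eventually_sup)
  moreover have "\<not> (\<exists>\<^sub>F s in at_right t. s \<in> ?T)"
  proof
    assume "\<exists>\<^sub>F s in at_right t. s \<in> ?T"
    from frequently_eventually_conj[OF this eventually_poisson_counts_at_right[OF assms(1) t(2), where n = n]]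
    obtain s where s: "s \<in> ?T" and counts: "\<forall>j\<in>{1..n}. poisson_count E j s \<omega> = poisson_count E j t \<omega>"
      by (auto dest: frequently_ex)
    have "Zt X E i t \<omega> = Zt X E i s \<omega>" if "i \<le> n" for i
      using Zt_eq_of_poisson_counts_eq[OF counts that] by (simp add: Zt_def Xt_def)
    with s t have "t \<in> ?T"
      by (simp add: Tset_def)
    then show False using assms(3) by simp
  qed
  ultimately have "\<exists>\<^sub>F s in at_left t. s \<in> ?T"
    by blast
  from frequently_eventually_conj[OF this eventually_poisson_counts_at_left[OF assms(1) t(2), where n = n]]
  obtain s where s: "s \<in> ?T" and counts: "\<forall>j\<in>{1..n}. poisson_count E j s \<omega> = poisson_count_left E j t \<omega>"
    by (auto dest: frequently_ex)
  show ?thesis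
  proof
    fix i assume i: "i \<in> {1..n}"
    with s have "real i powr \<alpha> \<le> Zt X E i s \<omega>"
      by (simp add: Tset_def)
    also have "\<dots> = Zt_left X E i t \<omega>"
      unfolding Zt_left_def using counts i by (intro Zt_eq_of_poisson_counts_eq) auto
    finally show "real i powr \<alpha> \<le> Zt_left X E i t \<omega>" .
  qed
qed

lemma poisson_count_left_eq_poisson_count:
  assumes "\<forall>k\<ge>1. arrival_time E j k \<omega> \<noteq> t"
  shows "poisson_count_left E j t \<omega> = poisson_count E j t \<omega>"
proof -
  have "{k. 1 \<le> k \<and> arrival_time E j k \<omega> < t} = {k. 1 \<le> k \<and> arrival_time E j k \<omega> \<le> t}"
    using assms by (auto simp: less_le)
  then show ?thesis
    by (simp add: poisson_count_eq poisson_count_left_def)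
qed

lemma mem_Tset_of_no_arrival:
  assumes "0 \<le> t" "t \<le> 1" and no_arrival: "\<forall>j\<in>{1..m}. \<forall>k\<ge>1. arrival_time E j k \<omega> \<noteq> t"
    and Zt_left_ge: "\<forall>i\<in>{1..m}. real i powr \<alpha> \<le> Zt_left X E i t \<omega>"
  shows "t \<in> Tset X E \<alpha> m \<omega>"
proof -
  have "\<forall>j\<in>{1..m}. poisson_count E j t \<omega> = poisson_count_left E j t \<omega>"
    using no_arrival by (simp add: poisson_count_left_eq_poisson_count)
  then have "Zt X E i t \<omega> = Zt_left X E i t \<omega>" if "i \<le> m" for i
    unfolding Zt_left_def using that by (rule Zt_eq_of_poisson_counts_eq)
  with assms(1,2) Zt_left_ge show ?thesis
    by (simp add: Tset_def)
qed

lemma Inter_closure_Tset_eq: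
  assumes regular: "regular_arrivals E \<omega>" and "0 \<le> \<alpha>"
    and no_survival: "\<And>j k. 1 \<le> j \<Longrightarrow> 1 \<le> k \<Longrightarrow> \<not> left_walk_survives X E j k \<omega>"
  shows "(\<Inter>n\<in>{1..}. closure (Tset X E \<alpha> n \<omega>)) = (\<Inter>n\<in>{1..}. Tset X E \<alpha> n \<omega>)"
proof
  show "(\<Inter>n\<in>{1..}. Tset X E \<alpha> n \<omega>) \<subseteq> (\<Inter>n\<in>{1..}. closure (Tset X E \<alpha> n \<omega>))"
    using closure_subset by blast
  show "(\<Inter>n\<in>{1..}. closure (Tset X E \<alpha> n \<omega>)) \<subseteq> (\<Inter>n\<in>{1..}. Tset X E \<alpha> n \<omega>)"
  proof
    fix t assume t: "t \<in> (\<Inter>n\<in>{1..}. closure (Tset X E \<alpha> n \<omega>))"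
    show "t \<in> (\<Inter>n\<in>{1..}. Tset X E \<alpha> n \<omega>)"
    proof (rule ccontr)
      assume "t \<notin> (\<Inter>n\<in>{1..}. Tset X E \<alpha> n \<omega>)"
      then obtain m where m: "1 \<le> m" "t \<notin> Tset X E \<alpha> m \<omega>"
        by auto
      have "closure (Tset X E \<alpha> m \<omega>) \<subseteq> {0..1}"
        by (rule closure_minimal[OF Tset_subset_unit_interval]) simp
      with t m have t01: "0 \<le> t" "t \<le> 1"
        by auto
      have Zt_left_ge: "real i powr \<alpha> \<le> Zt_left X E i t \<omega>" if "1 \<le> i" for i
      proof -
        have "t \<notin> Tset X E \<alpha> (max i m) \<omega>"
          using m(2) Tset_antimono[of m "max i m" X E \<alpha> \<omega>] by auto
        moreover have "t \<in> closure (Tset X E \<alpha> (max i m) \<omega>)"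
          using t m by auto
        ultimately show ?thesis
          using Zt_left_ge_of_mem_closure_Tset[OF regular] that by auto
      qed
      obtain j k where "1 \<le> j" "1 \<le> k" "arrival_time E j k \<omega> = t"
        using mem_Tset_of_no_arrival[OF t01, of m E \<omega> \<alpha> X] Zt_left_ge m(2) by force
      moreover have "1 \<le> Zt_left X E n t \<omega>" if "1 \<le> n" for n
        using Zt_left_ge[OF that] ge_one_powr_ge_zero[of "real n" \<alpha>] that \<open>0 \<le> \<alpha>\<close> by simp
      ultimately have "left_walk_survives X E j k \<omega>"
        using t01 by (simp add: left_walk_survives_def)
      with no_survival \<open>1 \<le> j\<close> \<open>1 \<le> k\<close> show False
        by blast
    qed
  qed
qed

lemma card_less_mono_bracket:
  fixes S :: "nat \<Rightarrow> real"
  assumes "mono S" "S 0 < \<tau>" "\<tau> < S m"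
  defines "c \<equiv> card {k. 1 \<le> k \<and> S k < \<tau>}"
  shows "\<forall>i\<le>c. S i < \<tau>" and "\<tau> \<le> S (Suc c)"
proof -
  define n where "n = (LEAST m. \<tau> \<le> S m)"
  have "\<tau> \<le> S n"
    unfolding n_def using assms(3) by (intro LeastI[of "\<lambda>m. \<tau> \<le> S m" m]) simp
  have below: "S i < \<tau>" if "i < n" for i
    using not_less_Least[of i "\<lambda>m. \<tau> \<le> S m"] that by (simp add: n_def)
  have "0 < n"
    using \<open>\<tau> \<le> S n\<close> assms(2) by (cases n) auto
  have "k < n" if "S k < \<tau>" for k
    using monoD[OF assms(1), of n k] \<open>\<tau> \<le> S n\<close> that by (cases "n \<le> k") auto
  with below have "{k. 1 \<le> k \<and> S k < \<tau>} = {1..<n}"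
    by auto
  then have "Suc c = n"
    using \<open>0 < n\<close> by (simp add: c_def)
  then show "\<forall>i\<le>c. S i < \<tau>" and "\<tau> \<le> S (Suc c)"
    using below \<open>\<tau> \<le> S n\<close> by auto
qed

text \<open>On regular paths, the event that \<open>N\<^sub>i(\<tau>-) = v i\<close> for \<open>i \<le> N\<close>; it is stated
  through the arrival times only, so that it is measurable with respect to them.\<close>
definition left_counts_event ::
    "'a measure \<Rightarrow> (nat \<Rightarrow> nat \<Rightarrow> 'a \<Rightarrow> real) \<Rightarrow> ('a \<Rightarrow> real) \<Rightarrow> nat \<Rightarrow> (nat \<Rightarrow> nat) \<Rightarrow> 'a set" where
  "left_counts_event M E \<tau> N v = {\<omega> \<in> space M. \<forall>i\<in>{1..N}.
     (\<forall>m\<le>v i. arrival_time E i m \<omega> < \<tau> \<omega>) \<and> \<tau> \<omega> \<le> arrival_time E i (Suc (v i)) \<omega>}"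

definition walk_event :: "'a measure \<Rightarrow> (nat \<Rightarrow> nat \<Rightarrow> 'a \<Rightarrow> real) \<Rightarrow> nat \<Rightarrow> (nat \<Rightarrow> nat) \<Rightarrow> 'a set" where
  "walk_event M X N v = {\<omega> \<in> space M.
     map (\<lambda>i. X i (v i) \<omega>) [1..<Suc N] \<in> {ys \<in> sign_lists N. prod_walk_pos 0 1 ys}}"

lemma disjoint_family_left_counts_event:
  "disjoint_family_on (left_counts_event M E \<tau> N) (Pi\<^sub>E {1..N} (\<lambda>_. UNIV))"
  unfolding disjoint_family_on_def
proof (intro ballI impI)
  fix v w :: "nat \<Rightarrow> nat"
  assume "v \<in> Pi\<^sub>E {1..N} (\<lambda>_. UNIV)" "w \<in> Pi\<^sub>E {1..N} (\<lambda>_. UNIV)" "v \<noteq> w"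
  then obtain i where i: "i \<in> {1..N}" "v i \<noteq> w i"
    using PiE_ext by blast
  show "left_counts_event M E \<tau> N v \<inter> left_counts_event M E \<tau> N w = {}"
  proof (rule ccontr)
    let ?S = "\<lambda>m. arrival_time E i m"
    assume "left_counts_event M E \<tau> N v \<inter> left_counts_event M E \<tau> N w \<noteq> {}"
    then obtain \<omega> where "\<omega> \<in> left_counts_event M E \<tau> N v" "\<omega> \<in> left_counts_event M E \<tau> N w"
      by blast
    with i(1) have v: "\<forall>m\<le>v i. ?S m \<omega> < \<tau> \<omega>" "\<tau> \<omega> \<le> ?S (Suc (v i)) \<omega>"
      and w: "\<forall>m\<le>w i. ?S m \<omega> < \<tau> \<omega>" "\<tau> \<omega> \<le> ?S (Suc (w i)) \<omega>"
      unfolding left_counts_event_def by blast+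
    consider "Suc (v i) \<le> w i" | "Suc (w i) \<le> v i"
      using i(2) by linarith
    then show False
    proof cases
      case 1
      with w(1) have "?S (Suc (v i)) \<omega> < \<tau> \<omega>"
        by blast
      with v(2) show False
        by simp
    next
      case 2
      with v(1) have "?S (Suc (w i)) \<omega> < \<tau> \<omega>"
        by blast
      with w(2) show False
        by simp
    qed
  qed
qed

lemma left_counts_eventI:
  assumes "regular_arrivals E \<omega>" "\<omega> \<in> space M" "1 \<le> j" "1 \<le> k" "arrival_time E j k \<omega> \<le> 1"
    and v: "\<forall>i\<in>{1..N}. v i = poisson_count_left E i (arrival_time E j k \<omega>) \<omega>"
  shows "\<omega> \<in> left_counts_event M E (arrival_time E j k) N v"
proof -
  have "(\<forall>m\<le>v i. arrival_time E i m \<omega> < arrival_time E j k \<omega>)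
      \<and> arrival_time E j k \<omega> \<le> arrival_time E i (Suc (v i)) \<omega>" if "i \<in> {1..N}" for i
  proof -
    from that have "1 \<le> i"
      by simp
    obtain m where "1 < arrival_time E i m \<omega>"
      using regular_arrivalsD(2)[OF assms(1) \<open>1 \<le> i\<close>] by blast
    with assms(5) have below_m: "arrival_time E j k \<omega> < arrival_time E i m \<omega>"
      by simp
    have above_0: "arrival_time E i 0 \<omega> < arrival_time E j k \<omega>"
      using arrival_time_pos[OF assms(1,3,4)] by (simp add: arrival_time_def)
    have "v i = card {m. 1 \<le> m \<and> arrival_time E i m \<omega> < arrival_time E j k \<omega>}"
      using v that by (simp add: poisson_count_left_def)
    then show ?thesis
      using card_less_mono_bracket[OF mono_arrival_time[OF assms(1) \<open>1 \<le> i\<close>] above_0 below_m]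
      by (simp only:)
  qed
  with assms(2) show ?thesis
    by (simp add: left_counts_event_def)
qed

lemma walk_eventI:
  assumes "\<omega> \<in> space M" "\<forall>i\<ge>1. \<forall>m. X i m \<omega> \<in> {-1, 1}" "\<forall>n\<in>{1..N}. 1 \<le> Zt_left X E n t \<omega>"
    and v: "\<forall>i\<in>{1..N}. v i = poisson_count_left E i t \<omega>"
  shows "\<omega> \<in> walk_event M X N v"
proof -
  have "(\<Sum>l=1..n. \<Prod>i=1..l. X i (v i) \<omega>) = Zt_left X E n t \<omega>" if "n \<in> {1..N}" for n
    unfolding Zt_left_def using v that by (intro sum.cong prod.cong) auto
  then have "prod_walk_pos 0 1 (map (\<lambda>i. X i (v i) \<omega>) [1..<Suc N])"
    using assms(3) unfolding prod_walk_pos_map_upt atLeastLessThanSuc_atLeastAtMost by simp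
  moreover have "map (\<lambda>i. X i (v i) \<omega>) [1..<Suc N] \<in> sign_lists N"
    using assms(2) by (auto simp: sign_lists_def)
  ultimately show ?thesis
    using assms(1) by (simp add: walk_event_def)
qed

section \<open>Independence of the signs from the arrival times\<close>

definition generated_sigma :: "'a measure \<Rightarrow> ('i \<Rightarrow> 'a \<Rightarrow> real) \<Rightarrow> 'i set \<Rightarrow> 'a measure" where
  "generated_sigma M Y K = sigma (space M) (\<Union>u\<in>K. {Y u -` B \<inter> space M | B. B \<in> sets borel})"

lemma space_generated_sigma [simp]: "space (generated_sigma M Y K) = space M"
  by (simp add: generated_sigma_def space_measure_of_conv)

lemma sets_generated_sigma:
  "sets (generated_sigma M Y K) = sigma_sets (space M) (\<Union>u\<in>K. {Y u -` B \<inter> space M | B. B \<in> sets borel})"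
  unfolding generated_sigma_def by (rule sets_measure_of) auto

lemma measurable_generated_sigma: "u \<in> K \<Longrightarrow> Y u \<in> borel_measurable (generated_sigma M Y K)"
  by (rule measurableI) (auto simp: sets_generated_sigma)

lemma sets_generated_sigma_subset:
  assumes "\<And>u. u \<in> K \<Longrightarrow> Y u \<in> borel_measurable M"
  shows "sets (generated_sigma M Y K) \<subseteq> sets M"
  unfolding sets_generated_sigma using assms by (intro sets.sigma_sets_subset) (auto simp: measurable_sets)

lemma (in prob_space) prob_INT_generated_sigma:
  assumes indep: "indep_vars (\<lambda>_. borel) Y I"
    and J: "finite J" "J \<noteq> {}" and G: "\<And>g. g \<in> J \<Longrightarrow> G g \<subseteq> I" "disjoint_family_on G J"
    and A: "\<And>g. g \<in> J \<Longrightarrow> A g \<in> sets (generated_sigma M Y (G g))"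
  shows "prob (\<Inter>g\<in>J. A g) = (\<Prod>g\<in>J. prob (A g))"
proof -
  let ?F = "\<lambda>u. {Y u -` B \<inter> space M | B. B \<in> sets borel}"
  have "indep_sets ?F I"
    using indep unfolding indep_vars_def2 by simp
  then have "indep_sets ?F (\<Union>g\<in>J. G g)"
    by (rule indep_sets_mono_index[rotated]) (use G in auto)
  then have "indep_sets (\<lambda>g. sigma_sets (space M) (\<Union>u\<in>G g. ?F u)) J"
  proof (rule indep_sets_collect_sigma)
    show "Int_stable (?F u)" for u
    proof (rule Int_stableI)
      fix a b assume "a \<in> ?F u" "b \<in> ?F u"
      then obtain B B' where "a = Y u -` B \<inter> space M" "b = Y u -` B' \<inter> space M"
        and "B \<in> sets borel" "B' \<in> sets borel"
        by auto
      then show "a \<inter> b \<in> ?F u"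
        by (auto intro!: exI[of _ "B \<inter> B'"])
    qed
  qed (use G in auto)
  then show ?thesis
    using J A by (intro indep_setsD) (auto simp: sets_generated_sigma)
qed

lemma (in prob_space) null_sets_of_prob_le_tendsto_0:
  assumes "A \<in> events" "\<And>n. prob A \<le> f n" "f \<longlonglongrightarrow> 0"
  shows "A \<in> null_sets M"
proof -
  have "prob A \<le> 0"
    using assms(3) by (rule LIMSEQ_le_const) (use assms(2) in auto)
  then show ?thesis
    using assms(1) by (intro null_setsI) (simp add: emeasure_eq_measure measure_le_0_iff)
qed

locale sign_poisson_family = prob_space M for M :: "'a measure" +
  fixes X E :: "nat \<Rightarrow> nat \<Rightarrow> 'a \<Rightarrow> real"
  assumes indep: "indep_vars (\<lambda>_. borel)
          (\<lambda>u. case u of Inl (j, i) \<Rightarrow> X j i | Inr (j, k) \<Rightarrow> E j k)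
          (Inl ` ({1..} \<times> UNIV) \<union> Inr ` ({1..} \<times> {1..}))"
    and X_vals: "\<And>j i. 1 \<le> j \<Longrightarrow> AE \<omega> in M. X j i \<omega> \<in> {-1, 1}"
    and X_half: "\<And>j i. 1 \<le> j \<Longrightarrow> prob {\<omega> \<in> space M. X j i \<omega> = 1} = 1/2"
    and E_exp: "\<And>j k. 1 \<le> j \<Longrightarrow> 1 \<le> k \<Longrightarrow> distributed M lborel (E j k) (exponential_density 1)"
begin

abbreviation family :: "(nat \<times> nat) + (nat \<times> nat) \<Rightarrow> 'a \<Rightarrow> real" where
  "family \<equiv> \<lambda>u. case u of Inl (j, i) \<Rightarrow> X j i | Inr (j, k) \<Rightarrow> E j k"

abbreviation index_set :: "((nat \<times> nat) + (nat \<times> nat)) set" where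
  "index_set \<equiv> Inl ` ({1..} \<times> UNIV) \<union> Inr ` ({1..} \<times> {1..})"

abbreviation arrivals_sigma :: "'a measure" where
  "arrivals_sigma \<equiv> generated_sigma M family (Inr ` ({1..} \<times> {1..}))"

lemma family_measurable: "u \<in> index_set \<Longrightarrow> family u \<in> borel_measurable M"
  using indep by (auto simp: indep_vars_def2)

lemma X_measurable [measurable]: "1 \<le> j \<Longrightarrow> X j i \<in> borel_measurable M"
  using family_measurable[of "Inl (j, i)"] by simp

lemma E_measurable [measurable]: "1 \<le> j \<Longrightarrow> 1 \<le> k \<Longrightarrow> E j k \<in> borel_measurable M"
  using family_measurable[of "Inr (j, k)"] by simp

lemma E_measurable_arrivals_sigma [measurable]:
  "1 \<le> j \<Longrightarrow> 1 \<le> k \<Longrightarrow> E j k \<in> borel_measurable arrivals_sigma"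
  using measurable_generated_sigma[of "Inr (j, k)" "Inr ` ({1..} \<times> {1..})" family M] by simp

lemma arrival_time_measurable_arrivals_sigma [measurable]:
  "1 \<le> j \<Longrightarrow> (\<lambda>\<omega>. arrival_time E j k \<omega>) \<in> borel_measurable arrivals_sigma"
  unfolding arrival_time_def by measurable

lemma sets_arrivals_sigma_subset: "sets arrivals_sigma \<subseteq> events"
  by (rule sets_generated_sigma_subset) (auto intro: family_measurable)

lemma prob_X_eq:
  assumes "1 \<le> j" "y \<in> {-1, 1}"
  shows "prob {\<omega> \<in> space M. X j i \<omega> = y} = 1/2"
proof -
  have "prob {\<omega> \<in> space M. X j i \<omega> = -1} + prob {\<omega> \<in> space M. X j i \<omega> = 1} =
      prob {\<omega> \<in> space M. X j i \<omega> \<in> {-1, 1}}"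
    using \<open>1 \<le> j\<close> by (subst finite_measure_Union[symmetric]) (auto intro!: arg_cong[where f = prob])
  also have "\<dots> = 1"
    using X_vals[OF \<open>1 \<le> j\<close>] \<open>1 \<le> j\<close> by (subst prob_Collect_eq_1) auto
  finally show ?thesis
    using assms X_half[OF \<open>1 \<le> j\<close>] by auto
qed

lemma AE_E_pos: "1 \<le> j \<Longrightarrow> 1 \<le> k \<Longrightarrow> AE \<omega> in M. 0 < E j k \<omega>"
  using exponential_distributedD_gt[OF E_exp, of j k 0]
  by (subst prob_Collect_eq_1[symmetric]) auto

lemma AE_exists_E_gt_1:
  assumes "1 \<le> j"
  shows "AE \<omega> in M. \<exists>k\<ge>1. 1 < E j k \<omega>"
proof -
  define c where "c = 1 - exp (-1 :: real)"
  define B where "B = {\<omega> \<in> space M. \<forall>k\<ge>1. E j k \<omega> \<le> 1}"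
  have B_events: "B \<in> events"
    unfolding B_def using \<open>1 \<le> j\<close> by measurable
  have "prob B \<le> c ^ Suc n" for n
  proof -
    let ?A = "\<lambda>k. {\<omega> \<in> space M. E j k \<omega> \<le> 1}"
    let ?C = "{\<omega> \<in> space M. \<forall>k\<in>{1..Suc n}. E j k \<omega> \<le> 1}"
    have "B \<subseteq> ?C"
      by (auto simp: B_def)
    moreover have "?C \<in> events"
      using \<open>1 \<le> j\<close> by measurable
    ultimately have "prob B \<le> prob ?C"
      by (intro finite_measure_mono)
    also have "?C = (\<Inter>k\<in>{1..Suc n}. ?A k)"
      by auto
    also have "prob \<dots> = (\<Prod>k\<in>{1..Suc n}. prob (?A k))"
    proof (rule prob_INT_generated_sigma[OF indep, where G = "\<lambda>k. {Inr (j, k)}"])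
      fix k assume "k \<in> {1..Suc n}"
      then have [measurable]: "E j k \<in> borel_measurable (generated_sigma M family {Inr (j, k)})"
        using measurable_generated_sigma[of "Inr (j, k)" "{Inr (j, k)}" family M] by simp
      have "{\<omega> \<in> space (generated_sigma M family {Inr (j, k)}). E j k \<omega> \<le> 1}
          \<in> sets (generated_sigma M family {Inr (j, k)})"
        by measurable
      then show "?A k \<in> sets (generated_sigma M family {Inr (j, k)})"
        by simp
    qed (use \<open>1 \<le> j\<close> in \<open>auto simp: disjoint_family_on_def\<close>)
    also have "\<dots> = c ^ Suc n"
      using exponential_distributedD_le[OF E_exp[OF \<open>1 \<le> j\<close>], of _ 1] by (simp add: c_def)
    finally show ?thesis .
  qed
  moreover have "(\<lambda>n. c ^ Suc n) \<longlonglongrightarrow> 0"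
    by (intro LIMSEQ_Suc LIMSEQ_power_zero) (auto simp: c_def)
  ultimately have "B \<in> null_sets M"
    by (rule null_sets_of_prob_le_tendsto_0[OF B_events])
  then show ?thesis
    by (rule AE_I') (auto simp: B_def not_less)
qed

lemma AE_regular_arrivals: "AE \<omega> in M. regular_arrivals E \<omega>"
proof -
  have "AE \<omega> in M. \<forall>j k. 1 \<le> j \<longrightarrow> 1 \<le> k \<longrightarrow> 0 < E j k \<omega>"
    unfolding AE_all_countable
  proof (intro allI)
    fix j k :: nat
    show "AE \<omega> in M. 1 \<le> j \<longrightarrow> 1 \<le> k \<longrightarrow> 0 < E j k \<omega>"
      using AE_E_pos[of j k] by (cases "1 \<le> j \<and> 1 \<le> k") auto
  qed
  moreover have "AE \<omega> in M. \<forall>j. 1 \<le> j \<longrightarrow> (\<exists>k\<ge>1. 1 < E j k \<omega>)"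
    unfolding AE_all_countable
  proof
    fix j :: nat
    show "AE \<omega> in M. 1 \<le> j \<longrightarrow> (\<exists>k\<ge>1. 1 < E j k \<omega>)"
      using AE_exists_E_gt_1[of j] by (cases "1 \<le> j") auto
  qed
  ultimately show ?thesis
  proof eventually_elim
    case (elim \<omega>)
    have "\<exists>k. 1 < arrival_time E j k \<omega>" if "1 \<le> j" for j
    proof -
      obtain k where "1 \<le> k" "1 < E j k \<omega>"
        using elim(2) \<open>1 \<le> j\<close> by blast
      moreover have "E j k \<omega> \<le> arrival_time E j k \<omega>"
        unfolding arrival_time_def using elim(1) \<open>1 \<le> j\<close> \<open>1 \<le> k\<close>
        by (intro member_le_sum) (auto intro: less_imp_le)
      ultimately have "1 < arrival_time E j k \<omega>"
        by linarith
      then show ?thesis ..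
    qed
    with elim(1) show ?case
      by (simp add: regular_arrivals_def)
  qed
qed

lemma AE_X_signs: "AE \<omega> in M. \<forall>j\<ge>1. \<forall>i. X j i \<omega> \<in> {-1, 1}"
  unfolding AE_all_countable
proof (intro allI)
  fix j i :: nat
  show "AE \<omega> in M. 1 \<le> j \<longrightarrow> (\<forall>i. X j i \<omega> \<in> {-1, 1})"
    using X_vals[of j] by (cases "1 \<le> j") (auto simp: AE_all_countable)
qed

lemma map_X_eq_events:
  assumes "length ys = N"
  shows "{\<omega> \<in> space M. map (\<lambda>i. X i (v i) \<omega>) [1..<Suc N] = ys} \<in> events"
  unfolding map_upt_eq_iff[OF assms] by measurable

lemma prob_Int_signs_eq:
  assumes A: "A \<in> sets arrivals_sigma" and y: "\<And>g. g \<in> {1..N} \<Longrightarrow> y g \<in> {-1, 1}"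
  shows "prob (A \<inter> {\<omega> \<in> space M. \<forall>g\<in>{1..N}. X g (v g) \<omega> = y g}) = prob A / 2 ^ N"
proof -
  define G :: "nat \<Rightarrow> ((nat \<times> nat) + (nat \<times> nat)) set"
    where "G g = (if g = 0 then Inr ` ({1..} \<times> {1..}) else {Inl (g, v g)})" for g :: nat
  define B where "B g = (if g = 0 then A else {\<omega> \<in> space M. X g (v g) \<omega> = y g})" for g
  have "A \<subseteq> space M"
    using A sets_arrivals_sigma_subset sets.sets_into_space by blast
  moreover have "{0..N} = insert 0 {1..N}"
    by auto
  ultimately have "A \<inter> {\<omega> \<in> space M. \<forall>g\<in>{1..N}. X g (v g) \<omega> = y g} = (\<Inter>g\<in>{0..N}. B g)"
    by (auto simp: B_def)
  also have "prob \<dots> = (\<Prod>g\<in>{0..N}. prob (B g))"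
  proof (rule prob_INT_generated_sigma[OF indep, where G = G])
    show "disjoint_family_on G {0..N}"
      by (auto simp: disjoint_family_on_def G_def)
    show "B g \<in> sets (generated_sigma M family (G g))" if "g \<in> {0..N}" for g
    proof (cases "g = 0")
      case True
      then show ?thesis
        using A by (simp add: B_def G_def)
    next
      case False
      then have [measurable]: "X g (v g) \<in> borel_measurable (generated_sigma M family (G g))"
        using measurable_generated_sigma[of "Inl (g, v g)" "{Inl (g, v g)}" family M] by (simp add: G_def)
      have "{\<omega> \<in> space (generated_sigma M family (G g)). X g (v g) \<omega> = y g}
          \<in> sets (generated_sigma M family (G g))"
        by measurable
      with False show ?thesis
        by (simp add: B_def)
    qed
  qed (auto simp: G_def)
  also have "\<dots> = prob A * (\<Prod>g\<in>{1..N}. 1 / 2)"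
  proof -
    have "(\<Prod>g\<in>{1..N}. prob (B g)) = (\<Prod>g\<in>{1..N}. 1 / 2)"
      using prob_X_eq y by (intro prod.cong) (auto simp: B_def)
    moreover have "(\<Prod>g\<in>{0..N}. prob (B g)) = prob (B 0) * (\<Prod>g\<in>{1..N}. prob (B g))"
      using \<open>{0..N} = insert 0 {1..N}\<close> by simp
    ultimately show ?thesis
      by (simp add: B_def)
  qed
  finally show ?thesis
    by (simp add: power_one_over)
qed

lemma prob_Int_map_X_eq:
  assumes A: "A \<in> sets arrivals_sigma" and ys: "ys \<in> sign_lists N"
  shows "prob (A \<inter> {\<omega> \<in> space M. map (\<lambda>i. X i (v i) \<omega>) [1..<Suc N] = ys}) = prob A / 2 ^ N"
proof -
  have len: "length ys = N"
    using ys by (simp add: sign_lists_def)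
  have "ys ! (g - 1) \<in> {-1, 1}" if "g \<in> {1..N}" for g
  proof -
    have "g - 1 < length ys"
      using that len by auto
    then have "ys ! (g - 1) \<in> set ys"
      by (rule nth_mem)
    with ys show ?thesis
      by (auto simp: sign_lists_def)
  qed
  then show ?thesis
    unfolding map_upt_eq_iff[OF len]
    by (rule prob_Int_signs_eq[OF A, where y = "\<lambda>g. ys ! (g - 1)" and v = v])
qed

lemma prob_Int_walk_event:
  assumes A: "A \<in> sets arrivals_sigma"
  shows "A \<inter> walk_event M X N v \<in> events"
    and "prob (A \<inter> walk_event M X N v) = prob A * stay_prob N 0"
proof -
  let ?W = "{ys \<in> sign_lists N. prod_walk_pos 0 1 ys}"
  let ?D = "\<lambda>ys. A \<inter> {\<omega> \<in> space M. map (\<lambda>i. X i (v i) \<omega>) [1..<Suc N] = ys}"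
  have eq: "A \<inter> walk_event M X N v = (\<Union>ys\<in>?W. ?D ys)"
    by (auto simp: walk_event_def)
  have D_events: "?D ys \<in> events" if "ys \<in> ?W" for ys
    using that A sets_arrivals_sigma_subset map_X_eq_events[of ys N v] by (auto simp: sign_lists_def)
  have finite: "finite ?W"
    using finite_sign_lists by simp
  show "A \<inter> walk_event M X N v \<in> events"
    unfolding eq using finite D_events by blast
  have "prob (A \<inter> walk_event M X N v) = (\<Sum>ys\<in>?W. prob (?D ys))"
    unfolding eq using D_events by (intro finite_measure_finite_Union[OF finite]) (auto simp: disjoint_family_on_def)
  also have "\<dots> = (\<Sum>ys\<in>?W. prob A / 2 ^ N)"
    using prob_Int_map_X_eq[OF A] by (intro sum.cong) auto
  also have "\<dots> = prob A * stay_prob N 0"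
    using card_prod_walk_pos[of 1 N 0] by simp
  finally show "prob (A \<inter> walk_event M X N v) = prob A * stay_prob N 0" .
qed

lemma left_counts_event_arrivals_sigma:
  assumes "1 \<le> j"
  shows "left_counts_event M E (arrival_time E j k) N v \<in> sets arrivals_sigma"
proof -
  have [measurable]: "(\<lambda>\<omega>. arrival_time E j k \<omega>) \<in> borel_measurable arrivals_sigma"
    by (rule arrival_time_measurable_arrivals_sigma[OF assms])
  have "{\<omega> \<in> space arrivals_sigma. \<forall>i\<in>{1..N}.
      (\<forall>m\<le>v i. arrival_time E i m \<omega> < arrival_time E j k \<omega>)
      \<and> arrival_time E j k \<omega> \<le> arrival_time E i (Suc (v i)) \<omega>} \<in> sets arrivals_sigma"
    by measurable
  then show ?thesis
    unfolding left_counts_event_def space_generated_sigma .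
qed

lemma prob_left_counts_walk_event_le:
  fixes j k N :: nat
  assumes "1 \<le> j"
  defines "F \<equiv> \<Union>v\<in>Pi\<^sub>E {1..N} (\<lambda>_. UNIV).
    left_counts_event M E (arrival_time E j k) N v \<inter> walk_event M X N v"
  shows "F \<in> events" and "prob F \<le> stay_prob N 0"
proof -
  let ?V = "Pi\<^sub>E {1..N} (\<lambda>_. UNIV :: nat set)"
  let ?L = "left_counts_event M E (arrival_time E j k) N"
  let ?p = "stay_prob N 0"
  have L_sets: "?L v \<in> sets arrivals_sigma" for v
    using assms(1) by (rule left_counts_event_arrivals_sigma)
  then have L_events: "?L v \<in> events" for v
    using sets_arrivals_sigma_subset by blast
  note LW = prob_Int_walk_event[OF L_sets]
  have countable: "countable ?V"
    by (intro countable_PiE) auto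
  show "F \<in> events"
    unfolding F_def using countable LW(1) by (intro sets.countable_UN'') auto
  have disjoint: "disjoint_family_on (\<lambda>v. ?L v \<inter> walk_event M X N v) ?V"
    using disjoint_family_left_counts_event[of M E "arrival_time E j k" N]
    unfolding disjoint_family_on_def by blast
  have "emeasure M F = (\<integral>\<^sup>+v. emeasure M (?L v \<inter> walk_event M X N v) \<partial>count_space ?V)"
    unfolding F_def using LW(1) countable disjoint by (rule emeasure_UN_countable)
  also have "\<dots> = (\<integral>\<^sup>+v. emeasure M (?L v) * ennreal ?p \<partial>count_space ?V)"
    using LW(1,2) L_events stay_prob_bounds[of N 0]
    by (intro nn_integral_cong) (simp add: emeasure_eq_measure ennreal_mult)
  also have "\<dots> = (\<integral>\<^sup>+v. emeasure M (?L v) \<partial>count_space ?V) * ennreal ?p"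
    by (rule nn_integral_multc) simp
  also have "(\<integral>\<^sup>+v. emeasure M (?L v) \<partial>count_space ?V) = emeasure M (\<Union>v\<in>?V. ?L v)"
    using L_events countable disjoint_family_left_counts_event
    by (intro emeasure_UN_countable[symmetric]) auto
  also have "\<dots> * ennreal ?p \<le> 1 * ennreal ?p"
    by (intro mult_right_mono emeasure_le_1) simp
  finally show "prob F \<le> ?p"
    using stay_prob_bounds[of N 0] by (simp add: emeasure_eq_measure)
qed

lemma AE_not_left_walk_survives:
  assumes "1 \<le> j" "1 \<le> k"
  shows "AE \<omega> in M. regular_arrivals E \<omega> \<longrightarrow> (\<forall>i\<ge>1. \<forall>m. X i m \<omega> \<in> {-1, 1}) \<longrightarrow>
    \<not> left_walk_survives X E j k \<omega>" (is "AE \<omega> in M. ?P \<omega>")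
proof -
  define F where "F N = (\<Union>v\<in>Pi\<^sub>E {1..N} (\<lambda>_. UNIV).
    left_counts_event M E (arrival_time E j k) N v \<inter> walk_event M X N v)" for N
  have "(\<Inter>N. F N) \<in> null_sets M"
  proof (rule null_sets_of_prob_le_tendsto_0)
    show "(\<Inter>N. F N) \<in> events"
      using prob_left_counts_walk_event_le(1)[OF assms(1)] by (auto simp: F_def)
    show "prob (\<Inter>N. F N) \<le> stay_prob N 0" for N
    proof -
      have "prob (\<Inter>N. F N) \<le> prob (F N)"
        using prob_left_counts_walk_event_le(1)[OF assms(1)] \<open>(\<Inter>N. F N) \<in> events\<close>
        by (intro finite_measure_mono) (auto simp: F_def)
      also have "\<dots> \<le> stay_prob N 0"
        unfolding F_def by (rule prob_left_counts_walk_event_le(2)[OF assms(1)])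
      finally show ?thesis .
    qed
  qed (rule stay_prob_tendsto_0)
  then show ?thesis
  proof (rule AE_I')
    show "{\<omega> \<in> space M. \<not> ?P \<omega>} \<subseteq> (\<Inter>N. F N)"
    proof (intro subsetI INT_I)
      fix \<omega> N
      assume "\<omega> \<in> {\<omega> \<in> space M. \<not> ?P \<omega>}"
      then have \<omega>: "\<omega> \<in> space M" "regular_arrivals E \<omega>" "\<forall>i\<ge>1. \<forall>m. X i m \<omega> \<in> {-1, 1}"
        "arrival_time E j k \<omega> \<le> 1" "\<forall>n\<ge>1. 1 \<le> Zt_left X E n (arrival_time E j k \<omega>) \<omega>"
        by (auto simp: left_walk_survives_def)
      define v where "v = restrict (\<lambda>i. poisson_count_left E i (arrival_time E j k \<omega>) \<omega>) {1..N}"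
      have "\<omega> \<in> left_counts_event M E (arrival_time E j k) N v"
        by (rule left_counts_eventI[OF \<omega>(2,1) assms \<omega>(4)]) (simp add: v_def)
      moreover have "\<omega> \<in> walk_event M X N v"
        by (rule walk_eventI[where t = "arrival_time E j k \<omega>"]) (use \<omega> in \<open>auto simp: v_def\<close>)
      moreover have "v \<in> Pi\<^sub>E {1..N} (\<lambda>_. UNIV)"
        by (simp add: v_def)
      ultimately show "\<omega> \<in> F N"
        unfolding F_def by blast
    qed
  qed
qed

lemma AE_Inter_closure_Tset_eq:
  assumes "0 \<le> \<alpha>"
  shows "AE \<omega> in M. (\<Inter>n\<in>{1..}. closure (Tset X E \<alpha> n \<omega>)) = (\<Inter>n\<in>{1..}. Tset X E \<alpha> n \<omega>)"
proof -
  have "AE \<omega> in M. \<forall>j k. 1 \<le> j \<longrightarrow> 1 \<le> k \<longrightarrow> regular_arrivals E \<omega> \<longrightarrow>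
      (\<forall>i\<ge>1. \<forall>m. X i m \<omega> \<in> {-1, 1}) \<longrightarrow> \<not> left_walk_survives X E j k \<omega>"
    unfolding AE_all_countable
  proof (intro allI)
    fix j k :: nat
    show "AE \<omega> in M. 1 \<le> j \<longrightarrow> 1 \<le> k \<longrightarrow> regular_arrivals E \<omega> \<longrightarrow>
      (\<forall>i\<ge>1. \<forall>m. X i m \<omega> \<in> {-1, 1}) \<longrightarrow> \<not> left_walk_survives X E j k \<omega>"
      using AE_not_left_walk_survives[of j k] by (cases "1 \<le> j \<and> 1 \<le> k") auto
  qed
  with AE_regular_arrivals AE_X_signs show ?thesis
  proof eventually_elim
    case (elim \<omega>)
    show ?case
      by (rule Inter_closure_Tset_eq[OF elim(1) assms]) (use elim in blast)
  qed
qed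

end

theorem lemma9:
  fixes M :: "'a measure"
    and X :: "nat \<Rightarrow> nat \<Rightarrow> 'a \<Rightarrow> real"
    and E :: "nat \<Rightarrow> nat \<Rightarrow> 'a \<Rightarrow> real"
    and \<alpha> :: real
  assumes "prob_space M"
    and indep: "prob_space.indep_vars M (\<lambda>_. borel)
          (\<lambda>u. case u of Inl (j, i) \<Rightarrow> X j i | Inr (j, k) \<Rightarrow> E j k)
          (Inl ` ({1..} \<times> UNIV) \<union> Inr ` ({1..} \<times> {1..}))"
    and X_vals: "\<And>j i. 1 \<le> j \<Longrightarrow> AE \<omega> in M. X j i \<omega> \<in> {-1, 1}"
    and X_half: "\<And>j i. 1 \<le> j \<Longrightarrow> measure M {\<omega> \<in> space M. X j i \<omega> = 1} = 1/2"
    and E_exp: "\<And>j k. 1 \<le> j \<Longrightarrow> 1 \<le> k \<Longrightarrow> distributed M lborel (E j k) (exponential_density 1)"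
    and "\<alpha> \<ge> 0"
  shows "AE \<omega> in M. (\<Inter>n\<in>{1..}. closure (Tset X E \<alpha> n \<omega>)) = (\<Inter>n\<in>{1..}. Tset X E \<alpha> n \<omega>)"
proof -
  interpret sign_poisson_family M X E
    by (rule sign_poisson_family.intro[OF \<open>prob_space M\<close>])
       (rule sign_poisson_family_axioms.intro[OF indep X_vals X_half E_exp])
  show ?thesis
    using \<open>\<alpha> \<ge> 0\<close> by (rule AE_Inter_closure_Tset_eq)
qed

end
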